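(* Let $\Gamma$ be a finite simplicial graph with vertex set $V=\{a_0,\ldots,a_{n-1}\}$. Every $w\in A(\Gamma)$ admits a unique canonical expression.
   Context: $A(\Gamma)=\langle V\mid[a,b]=1\text{ for }\{a,b\}\in E(\Gamma)\rangle$. The word length $\|w\|$ is the least $\ell\ge0$ with $w=s_1^{e_1}\cdots s_\ell^{e_\ell}$, $s_i\in V$, $e_i\in\{\pm1\}$. For a word $w=s_1^{e_1}\cdots s_\ell^{e_\ell}$ with $\ell=\|w\|$, $s_i\in V$, $e_i\in\{\pm1\}$, its right-counting vector $(f_1,\ldots,f_\ell)$ is given by $f_i=\min\|y\|$, the minimum over $y\in A(\Gamma)$ such that $s_i^{e_i}s_{i+1}^{e_{i+1}}\cdots s_\ell^{e_\ell}=x\,s_i^{e_i}\,y$ for some $x\in\langle \mathrm{lk}_\Gamma(s_i)\rangle$, where $\mathrm{lk}_\Gamma(s)$ is the set of vertices adjacent to $s$. Such a word is a canonical expression for $w$ if (A) $f_1\ge f_2\ge\cdots\ge f_\ell$, and (B) whenever $f_i=f_j$ with $i<j$ and $s_i=a_p$, $s_j=a_q$, we have $p<q$ and $[a_p,a_q]=1$. Uniqueness is as a word (sequence of letters $s_i^{e_i}$). *)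

theory Defs
  imports Main
begin

text \<open>Right-angled Artin group A(Gamma) on the vertex set V = {0..<n} (vertex i stands for a_i),
  with edge relation E.  A letter is a pair (s, e) with s a vertex and e = True for exponent +1,
  e = False for exponent -1.  Group elements are represented by words modulo the congruence
  generated by free cancellation and the defining commutation relations.\<close>

type_synonym letter = "nat \<times> bool"

definition simplicial_graph :: "nat \<Rightarrow> (nat \<Rightarrow> nat \<Rightarrow> bool) \<Rightarrow> bool" where
  "simplicial_graph n E \<longleftrightarrow>
     (\<forall>a b. E a b \<longrightarrow> a < n \<and> b < n) \<and> (\<forall>a b. E a b \<longrightarrow> E b a) \<and> (\<forall>a. \<not> E a a)"

definition inv_letter :: "letter \<Rightarrow> letter" where
  "inv_letter x = (fst x, \<not> snd x)"

definition word_over :: "nat set \<Rightarrow> letter list \<Rightarrow> bool" where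
  "word_over S w \<longleftrightarrow> (\<forall>x \<in> set w. fst x \<in> S)"

definition raag_step :: "(nat \<Rightarrow> nat \<Rightarrow> bool) \<Rightarrow> letter list \<Rightarrow> letter list \<Rightarrow> bool" where
  "raag_step E u v \<longleftrightarrow>
     (\<exists>p q x. u = p @ [x, inv_letter x] @ q \<and> v = p @ q) \<or>
     (\<exists>p q x y. E (fst x) (fst y) \<and> u = p @ [x, y] @ q \<and> v = p @ [y, x] @ q)"

definition raag_eq :: "(nat \<Rightarrow> nat \<Rightarrow> bool) \<Rightarrow> letter list \<Rightarrow> letter list \<Rightarrow> bool" where
  "raag_eq E = equivclp (raag_step E)"

definition wlen :: "nat \<Rightarrow> (nat \<Rightarrow> nat \<Rightarrow> bool) \<Rightarrow> letter list \<Rightarrow> nat" where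
  "wlen n E w = (LEAST l. \<exists>u. word_over {..<n} u \<and> length u = l \<and> raag_eq E u w)"

definition link :: "nat \<Rightarrow> (nat \<Rightarrow> nat \<Rightarrow> bool) \<Rightarrow> nat \<Rightarrow> nat set" where
  "link n E s = {t. t < n \<and> E s t}"

text \<open>Right-counting vector, 0-indexed: entry i corresponds to f_{i+1} of the paper.
  f_i = min ||y|| over y with s_i^{e_i} ... s_l^{e_l} = x s_i^{e_i} y, x in <lk(s_i)>.\<close>
definition rcount :: "nat \<Rightarrow> (nat \<Rightarrow> nat \<Rightarrow> bool) \<Rightarrow> letter list \<Rightarrow> nat \<Rightarrow> nat" where
  "rcount n E w i = (LEAST m. \<exists>x y. word_over (link n E (fst (w ! i))) x \<and> word_over {..<n} y \<and>
       raag_eq E (drop i w) (x @ [w ! i] @ y) \<and> wlen n E y = m)"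

definition canonical_expr :: "nat \<Rightarrow> (nat \<Rightarrow> nat \<Rightarrow> bool) \<Rightarrow> letter list \<Rightarrow> bool" where
  "canonical_expr n E w \<longleftrightarrow>
     word_over {..<n} w \<and> length w = wlen n E w \<and>
     (\<forall>i j. i < j \<and> j < length w \<longrightarrow> rcount n E w j \<le> rcount n E w i) \<and>
     (\<forall>i j. i < j \<and> j < length w \<and> rcount n E w i = rcount n E w j \<longrightarrow>
        fst (w ! i) < fst (w ! j) \<and>
        raag_eq E [(fst (w ! i), True), (fst (w ! j), True), (fst (w ! i), False), (fst (w ! j), False)] [])"

end

(*
  Call a word reduced if none of its letters can be commuted next to a later inverse letter.
  Inserting letters one at a time and cancelling whenever possible (reduce) is, up to commuting
  adjacent commuting letters, an invariant of the group element.  Hence reduced words are exactly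
  the geodesics, and two reduced words represent the same element iff they differ by such
  commutations.

  For a reduced word, the right-counting number of a letter s is the number of later letters
  that cannot be commuted to the left past s, and commutations preserve it.  Existence: sort a
  reduced word by commuting adjacent letters until the pairs (count, -vertex) strictly decrease;
  an adjacent pair out of order always commutes, since across a non-commuting pair the count
  strictly drops.  Uniqueness: if two sorted words in one commutation class began with different
  letters a and b, each head would reappear later in the other word with the same count, and
  condition (B) would give both a < b and b < a.
*)

theory Submission
  imports Defs
begin

lemma equivclp_map:
  assumes "equivp R" and "\<And>u v. r u v \<Longrightarrow> R (f u) (f v)" and "equivclp r a b"
  shows "R (f a) (f b)"
  using assms(3)
proof (induction rule: equivclp_induct)
  case base
  show ?case using assms(1) by (simp add: equivp_reflp)
next
  case (step y z)
  then show ?case using assms(1,2) by (meson equivp_symp equivp_transp)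
qed

lemma equivclp_image:
  assumes "\<And>u v. r u v \<Longrightarrow> r' (f u) (f v)" and "equivclp r a b"
  shows "equivclp r' (f a) (f b)"
  using equivclp_map[where R = "equivclp r'" and r = r and f = f] assms
  by (metis equivp_evquivclp r_into_equivclp)

lemma equivclp_invariant:
  assumes "\<And>u v. r u v \<Longrightarrow> f u = f v" and "equivclp r a b"
  shows "f a = f b"
  using equivclp_map[OF identity_equivp] assms by metis

lemma inv_letter_inv_letter [simp]: "inv_letter (inv_letter x) = x"
  by (simp add: inv_letter_def)

lemma fst_inv_letter [simp]: "fst (inv_letter x) = fst x"
  by (simp add: inv_letter_def)

definition comm_step :: "(nat \<Rightarrow> nat \<Rightarrow> bool) \<Rightarrow> letter list \<Rightarrow> letter list \<Rightarrow> bool" where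
  "comm_step E u v \<longleftrightarrow> (\<exists>p q x y. E (fst x) (fst y) \<and> u = p @ [x, y] @ q \<and> v = p @ [y, x] @ q)"

definition comm_eq :: "(nat \<Rightarrow> nat \<Rightarrow> bool) \<Rightarrow> letter list \<Rightarrow> letter list \<Rightarrow> bool" where
  "comm_eq E = equivclp (comm_step E)"

lemma comm_eq_equivp: "equivp (comm_eq E)"
  by (simp add: comm_eq_def)

lemma rel_option_comm_eq_equivp: "equivp (rel_option (comm_eq E))"
  using comm_eq_equivp
  by (meson equivpE equivpI option.rel_reflp option.rel_symp option.rel_transp)

lemma comm_eq_refl [simp]: "comm_eq E u u"
  by (simp add: comm_eq_def)

lemma comm_eq_sym: "comm_eq E u v \<Longrightarrow> comm_eq E v u"
  by (simp add: comm_eq_def equivclp_sym)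

lemma comm_eq_trans [trans]: "comm_eq E u v \<Longrightarrow> comm_eq E v w \<Longrightarrow> comm_eq E u w"
  unfolding comm_eq_def by (rule equivclp_trans)

lemma comm_step_append:
  assumes "comm_step E u v"
  shows "comm_step E (a @ u @ b) (a @ v @ b)"
proof -
  obtain p q x y where "E (fst x) (fst y)" "u = p @ [x, y] @ q" "v = p @ [y, x] @ q"
    using assms unfolding comm_step_def by blast
  then show ?thesis
    unfolding comm_step_def by (intro exI[of _ "a @ p"] exI[of _ "q @ b"] exI[of _ x] exI[of _ y]) simp
qed

lemma comm_eq_append: "comm_eq E u v \<Longrightarrow> comm_eq E (a @ u @ b) (a @ v @ b)"
  unfolding comm_eq_def by (rule equivclp_image[where f = "\<lambda>w. a @ w @ b"]) (rule comm_step_append)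

lemma comm_eq_Cons: "comm_eq E u v \<Longrightarrow> comm_eq E (x # u) (x # v)"
  using comm_eq_append[of E u v "[x]" "[]"] by simp

lemma comm_eq_swap:
  assumes "E (fst x) (fst y)"
  shows "comm_eq E (p @ x # y # q) (p @ y # x # q)"
proof -
  have "comm_step E (p @ [x, y] @ q) (p @ [y, x] @ q)"
    using assms unfolding comm_step_def by blast
  then show ?thesis
    unfolding comm_eq_def by auto
qed

lemma comm_eq_swap_front: "E (fst x) (fst y) \<Longrightarrow> comm_eq E (x # y # q) (y # x # q)"
  using comm_eq_swap[of E x y "[]" q] by simp

lemma comm_eq_length: "comm_eq E u v \<Longrightarrow> length u = length v"
  unfolding comm_eq_def by (rule equivclp_invariant[where f = length]) (auto simp: comm_step_def)

lemma comm_eq_set: "comm_eq E u v \<Longrightarrow> set u = set v"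
  unfolding comm_eq_def by (rule equivclp_invariant[where f = set]) (auto simp: comm_step_def)

lemma comm_eq_word_over: "comm_eq E u v \<Longrightarrow> word_over S u \<longleftrightarrow> word_over S v"
  by (simp add: word_over_def comm_eq_set)

lemma raag_eq_refl [simp]: "raag_eq E u u"
  by (simp add: raag_eq_def)

lemma raag_eq_sym: "raag_eq E u v \<Longrightarrow> raag_eq E v u"
  by (simp add: raag_eq_def equivclp_sym)

lemma raag_eq_trans [trans]: "raag_eq E u v \<Longrightarrow> raag_eq E v w \<Longrightarrow> raag_eq E u w"
  unfolding raag_eq_def by (rule equivclp_trans)

lemma raag_step_append:
  assumes "raag_step E u v"
  shows "raag_step E (a @ u @ b) (a @ v @ b)"
proof -
  from assms consider
      (cancel) p q x where "u = p @ [x, inv_letter x] @ q" "v = p @ q"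
    | (swap) p q x y where "E (fst x) (fst y)" "u = p @ [x, y] @ q" "v = p @ [y, x] @ q"
    unfolding raag_step_def by blast
  then show ?thesis
  proof cases
    case cancel
    then show ?thesis unfolding raag_step_def
      by (intro disjI1 exI[of _ "a @ p"] exI[of _ "q @ b"] exI[of _ x]) simp
  next
    case swap
    then show ?thesis unfolding raag_step_def
      by (intro disjI2 exI[of _ "a @ p"] exI[of _ "q @ b"] exI[of _ x] exI[of _ y]) simp
  qed
qed

lemma raag_eq_append: "raag_eq E u v \<Longrightarrow> raag_eq E (a @ u @ b) (a @ v @ b)"
  unfolding raag_eq_def by (rule equivclp_image[where f = "\<lambda>w. a @ w @ b"]) (rule raag_step_append)

lemma raag_eq_Cons: "raag_eq E u v \<Longrightarrow> raag_eq E (x # u) (x # v)"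
  using raag_eq_append[of E u v "[x]" "[]"] by simp

lemma raag_eq_append_left: "raag_eq E u v \<Longrightarrow> raag_eq E (a @ u) (a @ v)"
  using raag_eq_append[of E u v a "[]"] by simp

lemma raag_eq_append_right: "raag_eq E u v \<Longrightarrow> raag_eq E (u @ b) (v @ b)"
  using raag_eq_append[of E u v "[]" b] by simp

lemma raag_eq_if_comm_eq: "comm_eq E u v \<Longrightarrow> raag_eq E u v"
  unfolding comm_eq_def raag_eq_def
  by (rule equivclp_image[where f = id, simplified]) (auto simp: comm_step_def raag_step_def)

lemma raag_eq_cancel: "raag_eq E (a @ x # inv_letter x # b) (a @ b)"
proof -
  have "raag_step E (a @ [x, inv_letter x] @ b) (a @ b)"
    unfolding raag_step_def by blast
  then show ?thesis unfolding raag_eq_def by auto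
qed

lemma raag_eq_cancel_front: "raag_eq E (x # inv_letter x # b) b"
  using raag_eq_cancel[of E "[]" x b] by simp

lemma commutator_trivial:
  assumes "E p q"
  shows "raag_eq E [(p, True), (q, True), (p, False), (q, False)] []"
proof -
  have "raag_eq E [(p, True), (q, True), (p, False), (q, False)] [(q, True), (p, True), (p, False), (q, False)]"
    using raag_eq_if_comm_eq[OF comm_eq_swap[of E "(p, True)" "(q, True)" "[]"]] assms by simp
  also have "raag_eq E \<dots> [(q, True), (q, False)]"
    using raag_eq_cancel[of E "[(q, True)]" "(p, True)" "[(q, False)]"] by (simp add: inv_letter_def)
  also have "raag_eq E \<dots> []"
    using raag_eq_cancel_front[of E "(q, True)" "[]"] by (simp add: inv_letter_def)
  finally show ?thesis .
qed

definition inv_word :: "letter list \<Rightarrow> letter list" where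
  "inv_word x = rev (map inv_letter x)"

lemma raag_eq_inv_word: "raag_eq E (inv_word x @ x) []"
proof (induction x)
  case (Cons a x)
  have "raag_eq E (inv_word x @ inv_letter a # inv_letter (inv_letter a) # x) (inv_word x @ x)"
    by (rule raag_eq_cancel)
  then show ?case using Cons raag_eq_trans by (fastforce simp: inv_word_def)
qed (simp add: inv_word_def)

lemma raag_eq_inv_word_append:
  assumes "raag_eq E (a @ u) v"
  shows "raag_eq E u (inv_word a @ v)"
proof -
  have "raag_eq E u (inv_word a @ a @ u)"
    using raag_eq_append_right[OF raag_eq_inv_word, of E a u] by (simp add: raag_eq_sym)
  also have "raag_eq E \<dots> (inv_word a @ v)"
    using raag_eq_append_left[OF assms] .
  finally show ?thesis .
qed

lemma raag_eq_cancel_left: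
  assumes "raag_eq E (a @ u) (a @ v)"
  shows "raag_eq E u v"
proof -
  have "raag_eq E u (inv_word a @ a @ v)" by (rule raag_eq_inv_word_append[OF assms])
  also have "raag_eq E \<dots> v"
    using raag_eq_append_right[OF raag_eq_inv_word, of E a v] by simp
  finally show ?thesis .
qed

subsection \<open>Reduced words\<close>

(* For reduced w, push E x w is a reduced word for x w: x cancels against the first inverse
   letter that can be commuted to the front of w, if there is one. *)
fun cancel :: "(nat \<Rightarrow> nat \<Rightarrow> bool) \<Rightarrow> letter \<Rightarrow> letter list \<Rightarrow> letter list option" where
  "cancel E x [] = None"
| "cancel E x (y # ys) = (if y = inv_letter x then Some ys
     else if E (fst x) (fst y) then map_option (Cons y) (cancel E x ys) else None)"

definition push :: "(nat \<Rightarrow> nat \<Rightarrow> bool) \<Rightarrow> letter \<Rightarrow> letter list \<Rightarrow> letter list" where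
  "push E x w = (case cancel E x w of Some w' \<Rightarrow> w' | None \<Rightarrow> x # w)"

fun reduced :: "(nat \<Rightarrow> nat \<Rightarrow> bool) \<Rightarrow> letter list \<Rightarrow> bool" where
  "reduced E [] = True"
| "reduced E (x # w) \<longleftrightarrow> reduced E w \<and> cancel E x w = None"

definition reduce :: "(nat \<Rightarrow> nat \<Rightarrow> bool) \<Rightarrow> letter list \<Rightarrow> letter list" where
  "reduce E w = foldr (push E) w []"

lemma cancel_SomeD:
  "cancel E x w = Some w' \<Longrightarrow>
     \<exists>m t. w = m @ inv_letter x # t \<and> w' = m @ t \<and> (\<forall>z\<in>set m. E (fst x) (fst z))"
proof (induction w arbitrary: w')
  case (Cons y ys)
  show ?case
  proof (cases "y = inv_letter x")
    case True
    with Cons.prems show ?thesis by (intro exI[of _ "[]"] exI[of _ ys]) auto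
  next
    case False
    with Cons.prems obtain ys' where "E (fst x) (fst y)" "cancel E x ys = Some ys'" "w' = y # ys'"
      by (auto split: if_splits)
    with Cons.IH show ?thesis by (metis append_Cons set_ConsD)
  qed
qed simp

lemma cancel_length: "cancel E x w = Some w' \<Longrightarrow> length w = Suc (length w')"
  by (auto dest: cancel_SomeD)

lemma cancel_set: "cancel E x w = Some w' \<Longrightarrow> set w' \<subseteq> set w"
  by (auto dest: cancel_SomeD)

lemma cancel_None_append:
  "cancel E x q = None \<Longrightarrow> cancel E x (r @ q) = None \<or> (\<exists>r'. cancel E x (r @ q) = Some (r' @ q))"
  by (induction r) auto

lemma foldr_push_suffix:
  assumes "\<And>t. t \<in> set z \<Longrightarrow> cancel E t q = None"
  shows "\<exists>r. foldr (push E) z q = r @ q"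
  using assms
proof (induction z)
  case (Cons a z)
  then obtain r where r: "foldr (push E) z q = r @ q" by auto
  have "cancel E a q = None" using Cons.prems by simp
  moreover have "foldr (push E) (a # z) q = push E a (r @ q)" using r by simp
  ultimately show ?case
    using cancel_None_append[of E a q r] unfolding push_def
    by (metis (no_types, lifting) append_Cons option.simps(4,5))
qed simp

lemma reduced_append_right: "reduced E (m @ r) \<Longrightarrow> reduced E r"
  by (induction m) auto

lemma reduce_reduced: "reduced E w \<Longrightarrow> reduce E w = w"
  unfolding reduce_def by (induction w) (auto simp: push_def)

lemma reduce_Cons: "reduce E (x # w) = push E x (reduce E w)"
  by (simp add: reduce_def)

lemma reduce_append: "reduce E (p @ q) = foldr (push E) p (reduce E q)"
  by (simp add: reduce_def)

lemma length_reduce_le: "length (reduce E w) \<le> length w"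
proof (induction w)
  case (Cons x w)
  have "length (push E x w') \<le> Suc (length w')" for w'
    unfolding push_def by (cases "cancel E x w'") (auto dest: cancel_length)
  then show ?case using Cons order_trans by (fastforce simp: reduce_Cons)
qed (simp add: reduce_def)

lemma reduce_eq_if_length_eq: "length (reduce E w) = length w \<Longrightarrow> reduce E w = w"
proof (induction w)
  case (Cons x w)
  show ?case
  proof (cases "cancel E x (reduce E w)")
    case (Some w')
    then have "length (reduce E (x # w)) < length (x # w)"
      using cancel_length[OF Some] length_reduce_le[of E w] by (simp add: reduce_Cons push_def)
    then show ?thesis using Cons.prems by simp
  qed (use Cons in \<open>simp_all add: reduce_Cons push_def\<close>)
qed (simp add: reduce_def)

lemma set_reduce: "set (reduce E w) \<subseteq> set w"
proof (induction w)
  case (Cons x w)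
  then show ?case unfolding reduce_Cons push_def
    by (cases "cancel E x (reduce E w)") (auto dest: cancel_set)
qed (simp add: reduce_def)

lemma word_over_reduce: "word_over S w \<Longrightarrow> word_over S (reduce E w)"
  using set_reduce unfolding word_over_def by blast

locale raag_graph =
  fixes E :: "nat \<Rightarrow> nat \<Rightarrow> bool"
  assumes sym: "E a b \<Longrightarrow> E b a" and irrefl: "\<not> E a a"
begin

lemma comm_eq_move_front:
  assumes "\<forall>z\<in>set m. E (fst t) (fst z)"
  shows "comm_eq E (m @ t # r) (t # m @ r)"
  using assms
proof (induction m)
  case (Cons z m)
  have "comm_eq E (z # m @ t # r) (z # t # m @ r)"
    using Cons by (simp add: comm_eq_Cons)
  also have "comm_eq E \<dots> (t # z # m @ r)"
    using Cons.prems by (intro comm_eq_swap_front) (auto intro: sym)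
  finally show ?case by simp
qed simp

lemma cancel_Some_comm_eq:
  assumes "cancel E x w = Some w'"
  shows "comm_eq E w (inv_letter x # w')"
proof -
  obtain m t where "w = m @ inv_letter x # t" "w' = m @ t" "\<forall>z\<in>set m. E (fst x) (fst z)"
    using cancel_SomeD[OF assms] by blast
  then show ?thesis using comm_eq_move_front[of m "inv_letter x" t] by simp
qed

lemma cancel_append_commuting:
  "\<forall>z\<in>set m. E (fst x) (fst z) \<Longrightarrow> cancel E x (m @ t) = map_option ((@) m) (cancel E x t)"
proof (induction m)
  case (Cons z m)
  have "z \<noteq> inv_letter x" using Cons.prems irrefl by (metis fst_inv_letter list.set_intros(1))
  then show ?case using Cons by (simp add: option.map_comp comp_def)
qed (cases "cancel E x t"; simp)

lemma cancel_swap: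
  assumes ab: "E (fst a) (fst b)"
  shows "rel_option (comm_eq E) (cancel E x (p @ a # b # q)) (cancel E x (p @ b # a # q))"
proof (induction p)
  case Nil
  have "fst a \<noteq> fst b" using ab irrefl by metis
  then consider "a = inv_letter x" | "b = inv_letter x" | "a \<noteq> inv_letter x" "b \<noteq> inv_letter x"
    by auto
  then show ?case
  proof cases
    case 3
    then show ?thesis
      by (cases "cancel E x q") (auto intro: comm_eq_swap_front[of E a b, OF ab])
  qed (use ab sym \<open>fst a \<noteq> fst b\<close> in auto)
next
  case (Cons z p)
  then show ?case
    using comm_eq_swap[of E a b p q, OF ab]
    by (cases "cancel E x (p @ a # b # q)"; cases "cancel E x (p @ b # a # q)")
       (auto intro: comm_eq_Cons)
qed

lemma cancel_comm_eq:
  assumes "comm_eq E u v"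
  shows "rel_option (comm_eq E) (cancel E x u) (cancel E x v)"
proof (rule equivclp_map[OF rel_option_comm_eq_equivp, where f = "cancel E x"])
  show "equivclp (comm_step E) u v" using assms by (simp add: comm_eq_def)
qed (auto simp: comm_step_def cancel_swap)

lemma push_comm_eq: "comm_eq E u v \<Longrightarrow> comm_eq E (push E x u) (push E x v)"
  using cancel_comm_eq[of u v x] unfolding push_def
  by (cases "cancel E x u"; cases "cancel E x v") (auto intro: comm_eq_Cons)

lemma foldr_push_comm_eq: "comm_eq E r r' \<Longrightarrow> comm_eq E (foldr (push E) p r) (foldr (push E) p r')"
  by (induction p) (auto intro: push_comm_eq)

lemma cancel_None_preserved:
  assumes "cancel E y w = None" "cancel E x w = Some w'" "E (fst x) (fst y)"
  shows "cancel E y w' = None"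
  using assms
proof (induction w arbitrary: w')
  case (Cons z zs)
  have "z \<noteq> inv_letter y" using Cons.prems(1) by auto
  show ?case
  proof (cases "z = inv_letter x")
    case True
    then have "E (fst y) (fst z)" using Cons.prems(3) sym by simp
    then show ?thesis using Cons.prems True \<open>z \<noteq> inv_letter y\<close> by auto
  next
    case False
    then obtain zs' where "E (fst x) (fst z)" "cancel E x zs = Some zs'" "w' = z # zs'"
      using Cons.prems(2) by (auto split: if_splits)
    then show ?thesis using Cons \<open>z \<noteq> inv_letter y\<close> by (cases "E (fst y) (fst z)") auto
  qed
qed simp

lemma reduced_cancel: "reduced E w \<Longrightarrow> cancel E x w = Some w' \<Longrightarrow> reduced E w'"
proof (induction w arbitrary: w')
  case (Cons y ys)
  show ?case
  proof (cases "y = inv_letter x")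
    case False
    then obtain ys' where "E (fst x) (fst y)" "cancel E x ys = Some ys'" "w' = y # ys'"
      using Cons.prems by (auto split: if_splits)
    then show ?thesis using Cons cancel_None_preserved[of y ys x ys'] by auto
  qed (use Cons in simp)
qed simp

lemma reduced_push: "reduced E w \<Longrightarrow> reduced E (push E x w)"
  unfolding push_def using reduced_cancel by (cases "cancel E x w") auto

lemma reduced_reduce: "reduced E (reduce E w)"
  unfolding reduce_def by (induction w) (auto intro: reduced_push)

lemma reduced_iff_length_reduce: "reduced E w \<longleftrightarrow> length (reduce E w) = length w"
  using reduce_reduced reduce_eq_if_length_eq reduced_reduce by metis

lemma push_push_inv:
  assumes "reduced E w"
  shows "comm_eq E (push E x (push E (inv_letter x) w)) w"
proof (cases "cancel E (inv_letter x) w")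
  case (Some w')
  obtain m t where mt: "w = m @ x # t" "w' = m @ t" "\<forall>z\<in>set m. E (fst x) (fst z)"
    using cancel_SomeD[OF Some] by auto
  have "reduced E (x # t)" using assms mt reduced_append_right by metis
  then have "cancel E x w' = None" using cancel_append_commuting[OF mt(3), of t] mt by simp
  then have "push E x (push E (inv_letter x) w) = x # m @ t" using Some mt by (simp add: push_def)
  then show ?thesis using comm_eq_move_front[OF mt(3), of t] mt comm_eq_sym by metis
qed (simp add: push_def)

lemma push_commute:
  assumes xy: "E (fst x) (fst y)"
  shows "comm_eq E (push E x (push E y w)) (push E y (push E x w))"
proof -
  have yx: "E (fst y) (fst x)" using xy sym by blast
  have "fst x \<noteq> fst y" using xy irrefl by metis
  then have ne: "inv_letter y \<noteq> inv_letter x" "y \<noteq> inv_letter x" "x \<noteq> inv_letter y"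
    by (metis fst_inv_letter)+
  show ?thesis
  proof (cases "cancel E y w")
    case Ny: None
    show ?thesis
    proof (cases "cancel E x w")
      case (Some w2)
      have "rel_option (comm_eq E) (cancel E y w) (cancel E y (inv_letter x # w2))"
        using cancel_comm_eq[OF cancel_Some_comm_eq[OF Some]] .
      then have "cancel E y w2 = None" using Ny ne yx by (cases "cancel E y w2") auto
      then show ?thesis using Ny Some ne xy yx by (simp add: push_def)
    qed (use Ny ne xy yx in \<open>simp add: push_def comm_eq_swap_front\<close>)
  next
    case Sy: (Some w1)
    have r1: "rel_option (comm_eq E) (cancel E x w) (map_option (Cons (inv_letter y)) (cancel E x w1))"
      using cancel_comm_eq[OF cancel_Some_comm_eq[OF Sy], of x] ne xy by simp
    show ?thesis
    proof (cases "cancel E x w")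
      case None
      then have "cancel E x w1 = None" using r1 by (cases "cancel E x w1") auto
      then show ?thesis using None Sy ne xy yx by (simp add: push_def)
    next
      case Sx: (Some w2)
      obtain w3 where w3: "cancel E x w1 = Some w3" "comm_eq E w2 (inv_letter y # w3)"
        using r1 Sx by (cases "cancel E x w1") auto
      have "rel_option (comm_eq E) (cancel E y w2) (cancel E y (inv_letter y # w3))"
        using cancel_comm_eq[OF w3(2)] .
      then obtain w4 where "cancel E y w2 = Some w4" "comm_eq E w4 w3"
        by (cases "cancel E y w2") auto
      then show ?thesis using Sy Sx w3 by (simp add: push_def comm_eq_sym)
    qed
  qed
qed

lemma push_raag_eq: "raag_eq E (push E x r) (x # r)"
proof (cases "cancel E x r")
  case (Some r')
  have "raag_eq E (x # r) (x # inv_letter x # r')"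
    using raag_eq_if_comm_eq[OF cancel_Some_comm_eq[OF Some]] by (rule raag_eq_Cons)
  also have "raag_eq E \<dots> r'" by (rule raag_eq_cancel_front)
  finally show ?thesis using Some by (simp add: push_def raag_eq_sym)
qed (simp add: push_def)

lemma reduce_raag_eq: "raag_eq E (reduce E w) w"
proof (induction w)
  case (Cons x w)
  then show ?case
    using push_raag_eq[of x "reduce E w"] raag_eq_Cons[OF Cons.IH, of x]
    by (simp add: reduce_Cons raag_eq_trans)
qed (simp add: reduce_def)

lemma comm_eq_reduce_if_raag_step:
  assumes "raag_step E u v"
  shows "comm_eq E (reduce E u) (reduce E v)"
  using assms unfolding raag_step_def
proof (elim disjE exE conjE)
  fix p q x assume "u = p @ [x, inv_letter x] @ q" "v = p @ q"
  then show ?thesis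
    using push_push_inv[OF reduced_reduce, of x q] foldr_push_comm_eq
    by (simp add: reduce_append reduce_Cons)
next
  fix p q x y assume "E (fst x) (fst y)" "u = p @ [x, y] @ q" "v = p @ [y, x] @ q"
  then show ?thesis
    using push_commute foldr_push_comm_eq by (simp add: reduce_append reduce_Cons)
qed

theorem comm_eq_reduce_if_raag_eq:
  assumes "raag_eq E u v"
  shows "comm_eq E (reduce E u) (reduce E v)"
proof (rule equivclp_map[OF comm_eq_equivp, where f = "reduce E"])
  show "equivclp (raag_step E) u v" using assms by (simp add: raag_eq_def)
qed (rule comm_eq_reduce_if_raag_step)

lemma reduced_comm_eq:
  assumes "reduced E u" "comm_eq E u v"
  shows "reduced E v"
proof -
  have "comm_eq E u (reduce E v)"
    using comm_eq_reduce_if_raag_eq[OF raag_eq_if_comm_eq[OF assms(2)]] reduce_reduced[OF assms(1)]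
    by simp
  then show ?thesis
    using comm_eq_length assms(2) reduced_iff_length_reduce by metis
qed

lemma comm_eq_if_reduced_raag_eq:
  "reduced E u \<Longrightarrow> reduced E v \<Longrightarrow> raag_eq E u v \<Longrightarrow> comm_eq E u v"
  using comm_eq_reduce_if_raag_eq reduce_reduced by metis

lemma wlen_eq_length_reduce:
  assumes "word_over {..<n} w"
  shows "wlen n E w = length (reduce E w)"
  unfolding wlen_def
proof (rule Least_equality)
  show "\<exists>u. word_over {..<n} u \<and> length u = length (reduce E w) \<and> raag_eq E u w"
    using assms word_over_reduce reduce_raag_eq by blast
next
  fix l assume "\<exists>u. word_over {..<n} u \<and> length u = l \<and> raag_eq E u w"
  then obtain u where "length u = l" "raag_eq E u w" by blast
  then show "length (reduce E w) \<le> l"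
    using comm_eq_length[OF comm_eq_reduce_if_raag_eq] length_reduce_le by metis
qed

lemma reduced_iff_geodesic:
  "word_over {..<n} w \<Longrightarrow> reduced E w \<longleftrightarrow> length w = wlen n E w"
  using wlen_eq_length_reduce reduced_iff_length_reduce by metis

end

subsection \<open>Dependent letters and the right-counting vector\<close>

(* dep_part E B v consists of the letters of v that cannot be moved to the front of v past the
   letters with vertex in B and the earlier letters of dep_part; indep_part E B v consists of
   the others.  On reduced words dep_count is the right-counting vector (rcount_eq_dep_count). *)
fun dep_part :: "(nat \<Rightarrow> nat \<Rightarrow> bool) \<Rightarrow> nat set \<Rightarrow> letter list \<Rightarrow> letter list" where
  "dep_part E B [] = []"
| "dep_part E B (t # ts) = (if \<exists>b\<in>B. \<not> E b (fst t)
     then t # dep_part E (insert (fst t) B) ts else dep_part E B ts)"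

fun indep_part :: "(nat \<Rightarrow> nat \<Rightarrow> bool) \<Rightarrow> nat set \<Rightarrow> letter list \<Rightarrow> letter list" where
  "indep_part E B [] = []"
| "indep_part E B (t # ts) = (if \<exists>b\<in>B. \<not> E b (fst t)
     then indep_part E (insert (fst t) B) ts else t # indep_part E B ts)"

definition dep_count :: "(nat \<Rightarrow> nat \<Rightarrow> bool) \<Rightarrow> letter list \<Rightarrow> nat \<Rightarrow> nat" where
  "dep_count E c i = length (dep_part E {fst (c ! i)} (drop (Suc i) c))"

definition dep_ordered :: "(nat \<Rightarrow> nat \<Rightarrow> bool) \<Rightarrow> letter list \<Rightarrow> bool" where
  "dep_ordered E c \<longleftrightarrow> (\<forall>i j. i < j \<and> j < length c \<longrightarrow>
     dep_count E c j \<le> dep_count E c i \<and>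
     (dep_count E c i = dep_count E c j \<longrightarrow> fst (c ! i) < fst (c ! j)))"

lemma dep_part_append:
  "dep_part E B (p @ q) = dep_part E B p @ dep_part E (B \<union> fst ` set (dep_part E B p)) q"
  by (induction p arbitrary: B) (auto simp: insert_commute)

lemma length_dep_part_mono:
  "B \<subseteq> B' \<Longrightarrow> length (dep_part E B v) \<le> length (dep_part E B' v)"
proof (induction v arbitrary: B B')
  case (Cons t ts)
  have "insert (fst t) B \<subseteq> insert (fst t) B'" "B \<subseteq> insert (fst t) B'" using Cons.prems by blast+
  then show ?case using Cons by (auto intro: le_SucI)
qed simp

lemma set_dep_part: "set (dep_part E B v) \<subseteq> set v"
  by (induction v arbitrary: B) auto

lemma set_indep_part: "set (indep_part E B v) \<subseteq> set v"
  by (induction v arbitrary: B) auto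

lemma indep_part_adjacent: "t \<in> set (indep_part E B v) \<Longrightarrow> b \<in> B \<Longrightarrow> E b (fst t)"
  by (induction v arbitrary: B) (auto split: if_splits)

lemma dep_part_append_adjacent:
  "\<forall>z\<in>set m. \<forall>b\<in>B. E b (fst z) \<Longrightarrow> dep_part E B (m @ t) = dep_part E B t"
  by (induction m) auto

lemma dep_count_Cons: "dep_count E (a # r) (Suc i) = dep_count E r i"
  by (simp add: dep_count_def)

lemma dep_count_append: "dep_count E (p @ r) (length p + k) = dep_count E r k"
  by (simp add: dep_count_def nth_append)

lemma dep_ordered_Cons: "dep_ordered E (a # r) \<Longrightarrow> dep_ordered E r"
  unfolding dep_ordered_def by (fastforce simp: dep_count_Cons dest: spec[of _ "Suc _"])

context raag_graph
begin

lemma cancel_dep_part: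
  assumes "\<forall>b\<in>B. E b (fst t)"
  shows "cancel E t (dep_part E B v) = None"
  using assms
proof (induction v arbitrary: B)
  case (Cons x xs)
  show ?case
  proof (cases "\<exists>b\<in>B. \<not> E b (fst x)")
    case True
    then have "x \<noteq> inv_letter t" using Cons.prems by auto
    moreover have "\<forall>b\<in>insert (fst x) B. E b (fst t)" if "E (fst t) (fst x)"
      using Cons.prems that sym by auto
    ultimately show ?thesis using True Cons.IH by auto
  qed (use Cons in simp)
qed simp

lemma dep_part_swap:
  assumes "E (fst x) (fst y)"
  shows "length (dep_part E B [x, y]) = length (dep_part E B [y, x]) \<and>
    set (dep_part E B [x, y]) = set (dep_part E B [y, x])"
  using assms sym by (auto simp: insert_commute)

lemma dep_part_comm_eq:
  assumes "comm_eq E u v"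
  shows "length (dep_part E B u) = length (dep_part E B v)" "set (dep_part E B u) = set (dep_part E B v)"
proof -
  let ?inv = "\<lambda>w. (length (dep_part E B w), set (dep_part E B w))"
  have "?inv (p @ [x, y] @ q) = ?inv (p @ [y, x] @ q)" if xy: "E (fst x) (fst y)" for p q x y
  proof -
    define B' where "B' = B \<union> fst ` set (dep_part E B p)"
    have "dep_part E B (p @ [a, b] @ q) =
        dep_part E B p @ dep_part E B' [a, b] @ dep_part E (B' \<union> fst ` set (dep_part E B' [a, b])) q"
      for a b unfolding B'_def by (simp only: dep_part_append)
    then show ?thesis
      using dep_part_swap[OF xy, of B'] by simp
  qed
  then have "?inv u = ?inv v"
    using equivclp_invariant[of "comm_step E" ?inv] assms
    unfolding comm_eq_def comm_step_def by blast
  then show "length (dep_part E B u) = length (dep_part E B v)" "set (dep_part E B u) = set (dep_part E B v)"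
    by simp_all
qed

lemma comm_eq_split_dep_part:
  assumes "\<forall>z\<in>set p. fst z \<in> B"
  shows "comm_eq E (p @ v) (indep_part E B v @ p @ dep_part E B v)"
  using assms
proof (induction v arbitrary: p B)
  case (Cons t ts)
  show ?case
  proof (cases "\<exists>b\<in>B. \<not> E b (fst t)")
    case True
    have "\<forall>z\<in>set (p @ [t]). fst z \<in> insert (fst t) B" using Cons.prems by auto
    from Cons.IH[OF this] show ?thesis using True by simp
  next
    case False
    then have "\<forall>z\<in>set p. E (fst t) (fst z)" using Cons.prems sym by blast
    then have "comm_eq E (p @ t # ts) (t # p @ ts)" by (rule comm_eq_move_front)
    also have "comm_eq E \<dots> (t # indep_part E B ts @ p @ dep_part E B ts)"
      using Cons.IH[OF Cons.prems] by (rule comm_eq_Cons)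
    finally show ?thesis using False by simp
  qed
qed simp

lemma comm_eq_split_dep_part_Cons:
  "comm_eq E (s # v) (indep_part E {fst s} v @ s # dep_part E {fst s} v)"
  using comm_eq_split_dep_part[of "[s]" "{fst s}" v] by simp

lemma reduced_dep_part: "reduced E (s # v) \<Longrightarrow> reduced E (dep_part E {fst s} v)"
  using reduced_comm_eq[OF _ comm_eq_split_dep_part_Cons]
    reduced_append_right[of E "indep_part E {fst s} v @ [s]"] by simp

lemma length_dep_part_le_wlen:
  assumes red: "reduced E (s # v)" and y: "word_over {..<n} y"
    and x: "\<forall>a\<in>set x. E (fst s) (fst a)" and eq: "raag_eq E (s # v) (x @ s # y)"
  shows "length (dep_part E {fst s} v) \<le> wlen n E y"
proof -
  define N where "N = indep_part E {fst s} v"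
  define D where "D = dep_part E {fst s} v"
  have split: "comm_eq E (s # v) (N @ s # D)"
    unfolding N_def D_def by (rule comm_eq_split_dep_part_Cons)
  have "reduced E D" unfolding D_def by (rule reduced_dep_part[OF red])
  have N: "\<forall>a\<in>set N. E (fst s) (fst a)" using indep_part_adjacent unfolding N_def by blast
  have "raag_eq E (s # x @ y) (x @ s # y)"
    using raag_eq_if_comm_eq[OF comm_eq_move_front[OF x]] by (rule raag_eq_sym)
  also have "raag_eq E \<dots> (N @ s # D)"
    using raag_eq_trans[OF raag_eq_sym[OF eq] raag_eq_if_comm_eq[OF split]] .
  also have "raag_eq E \<dots> (s # N @ D)"
    using raag_eq_if_comm_eq[OF comm_eq_move_front[OF N]] .
  finally have "raag_eq E (x @ y) (N @ D)" using raag_eq_cancel_left[of E "[s]"] by simp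
  then have "raag_eq E y ((inv_word x @ N) @ D)" using raag_eq_inv_word_append by simp
  then have "wlen n E y = length (foldr (push E) (inv_word x @ N) D)"
    using wlen_eq_length_reduce[OF y] comm_eq_length[OF comm_eq_reduce_if_raag_eq]
    by (metis reduce_append reduce_reduced[OF \<open>reduced E D\<close>])
  moreover have "cancel E t D = None" if "t \<in> set (inv_word x @ N)" for t
    using that x N unfolding D_def inv_word_def by (intro cancel_dep_part) auto
  then obtain r where "foldr (push E) (inv_word x @ N) D = r @ D"
    using foldr_push_suffix by blast
  ultimately show ?thesis unfolding D_def[symmetric] by simp
qed

lemma rcount_eq_dep_count:
  assumes c: "word_over {..<n} c" and red: "reduced E c" and i: "i < length c"
  shows "rcount n E c i = dep_count E c i"
proof -
  define s where "s = c ! i"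
  define v where "v = drop (Suc i) c"
  define N where "N = indep_part E {fst s} v"
  define D where "D = dep_part E {fst s} v"
  have drop: "drop i c = s # v" using i by (simp add: s_def v_def Cons_nth_drop_Suc)
  then have red': "reduced E (s # v)"
    using red reduced_append_right[of E "take i c"] by (metis append_take_drop_id)
  have "set v \<subseteq> set c" unfolding v_def by (rule set_drop_subset)
  then have "set D \<subseteq> set c" "set N \<subseteq> set c"
    using set_dep_part set_indep_part unfolding D_def N_def by blast+
  have D: "word_over {..<n} D"
    using c \<open>set D \<subseteq> set c\<close> unfolding word_over_def by blast
  have wD: "wlen n E D = length D"
    using reduced_iff_geodesic[OF D] reduced_dep_part[OF red'] unfolding D_def by simp
  have N: "word_over (link n E (fst s)) N"
    using c \<open>set N \<subseteq> set c\<close> indep_part_adjacent[of _ E "{fst s}" v]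
    unfolding word_over_def link_def N_def by blast
  show ?thesis
    unfolding rcount_def dep_count_def s_def[symmetric] v_def[symmetric] D_def[symmetric]
  proof (rule Least_equality)
    have "raag_eq E (drop i c) (N @ [s] @ D)"
      using raag_eq_if_comm_eq[OF comm_eq_split_dep_part_Cons] drop unfolding N_def D_def by simp
    then show "\<exists>x y. word_over (link n E (fst s)) x \<and> word_over {..<n} y \<and>
        raag_eq E (drop i c) (x @ [s] @ y) \<and> wlen n E y = length D"
      using N D wD by blast
  next
    fix m assume "\<exists>x y. word_over (link n E (fst s)) x \<and> word_over {..<n} y \<and>
        raag_eq E (drop i c) (x @ [s] @ y) \<and> wlen n E y = m"
    then obtain x y where x: "word_over (link n E (fst s)) x" and "word_over {..<n} y"
        "raag_eq E (s # v) (x @ s # y)" "wlen n E y = m"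
      using drop by auto
    moreover have "\<forall>a\<in>set x. E (fst s) (fst a)"
      using x unfolding word_over_def link_def by simp
    ultimately show "length D \<le> m"
      unfolding D_def using length_dep_part_le_wlen[OF red'] by blast
  qed
qed

lemma dep_count_less_if_not_adjacent:
  assumes ij: "i < j" "j < length c" and "\<not> E (fst (c ! i)) (fst (c ! j))"
  shows "dep_count E c j < dep_count E c i"
proof -
  define m where "m = take (j - Suc i) (drop (Suc i) c)"
  define t where "t = drop (Suc j) c"
  have "drop (Suc i) c = m @ drop j c"
    using ij unfolding m_def by (metis append_take_drop_id drop_drop Suc_leI le_add_diff_inverse2)
  also have "drop j c = c ! j # t" using ij by (simp add: t_def Cons_nth_drop_Suc)
  finally have split: "drop (Suc i) c = m @ c ! j # t" .
  define B where "B = {fst (c ! i)} \<union> fst ` set (dep_part E {fst (c ! i)} m)"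
  have "\<exists>b\<in>B. \<not> E b (fst (c ! j))" using assms(3) unfolding B_def by blast
  then have "dep_count E c i = length (dep_part E {fst (c ! i)} m) +
      Suc (length (dep_part E (insert (fst (c ! j)) B) t))"
    unfolding dep_count_def split dep_part_append B_def by simp
  moreover have "dep_count E c j \<le> length (dep_part E (insert (fst (c ! j)) B) t)"
    unfolding dep_count_def t_def by (rule length_dep_part_mono) simp
  ultimately show ?thesis by linarith
qed

subsection \<open>Uniqueness\<close>

lemma comm_eq_Cons_cancel: "comm_eq E (a # u) (a # v) \<Longrightarrow> comm_eq E u v"
  using cancel_comm_eq[of "a # u" "a # v" "inv_letter a"] by simp

lemma comm_eq_Cons_Cons_neq:
  assumes "comm_eq E (a # u) (b # v)" and "a \<noteq> b"
  shows "\<exists>m t. v = m @ a # t \<and> (\<forall>z\<in>set m. E (fst a) (fst z)) \<and> E (fst a) (fst b) \<and>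
    comm_eq E u (b # m @ t)"
proof -
  have "rel_option (comm_eq E) (Some u) (cancel E (inv_letter a) (b # v))"
    using cancel_comm_eq[OF assms(1), of "inv_letter a"] by simp
  then obtain w where w: "cancel E (inv_letter a) (b # v) = Some w" "comm_eq E u w"
    by (cases "cancel E (inv_letter a) (b # v)") auto
  then obtain v' where v': "E (fst a) (fst b)" "cancel E (inv_letter a) v = Some v'" "w = b # v'"
    using assms(2) by (auto split: if_splits)
  obtain m t where "v = m @ a # t" "v' = m @ t" "\<forall>z\<in>set m. E (fst a) (fst z)"
    using cancel_SomeD[OF v'(2)] by auto
  then show ?thesis using v' w by auto
qed

lemma dep_count_head_reappears:
  assumes "comm_eq E (a # r) (b # r')" and "a \<noteq> b"
  shows "\<exists>k. 0 < k \<and> k < length (b # r') \<and> (b # r') ! k = a \<and>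
    dep_count E (b # r') k = dep_count E (a # r) 0"
proof -
  obtain m t where mt: "r' = m @ a # t" "\<forall>z\<in>set (b # m). E (fst a) (fst z)" "comm_eq E r (b # m @ t)"
    using comm_eq_Cons_Cons_neq[OF assms] by auto
  have "dep_count E (a # r) 0 = length (dep_part E {fst a} ((b # m) @ t))"
    unfolding dep_count_def using dep_part_comm_eq(1)[OF mt(3)] by simp
  also have "\<dots> = length (dep_part E {fst a} t)"
    using dep_part_append_adjacent[of "b # m" "{fst a}" E t] mt(2) by simp
  also have "\<dots> = dep_count E (b # r') (length (b # m))"
    using dep_count_append[of E "b # m" "a # t" 0] mt(1) by (simp add: dep_count_def)
  finally show ?thesis using mt(1) by (intro exI[of _ "length (b # m)"]) (simp add: nth_append)
qed

theorem dep_ordered_unique: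
  "comm_eq E c c' \<Longrightarrow> dep_ordered E c \<Longrightarrow> dep_ordered E c' \<Longrightarrow> c = c'"
proof (induction c arbitrary: c')
  case Nil
  then show ?case using comm_eq_length by fastforce
next
  case (Cons a r)
  obtain b r' where c': "c' = b # r'" using comm_eq_length[OF Cons.prems(1)] by (cases c') auto
  show ?case
  proof (cases "a = b")
    case True
    then show ?thesis
      using Cons comm_eq_Cons_cancel dep_ordered_Cons c' by metis
  next
    case False
    obtain k where k: "0 < k" "k < length c'" "c' ! k = a" "dep_count E c' k = dep_count E (a # r) 0"
      using dep_count_head_reappears[OF Cons.prems(1)[unfolded c'] False] c' by auto
    obtain k' where k': "0 < k'" "k' < length (a # r)" "(a # r) ! k' = b"
        "dep_count E (a # r) k' = dep_count E c' 0"
      using dep_count_head_reappears[OF comm_eq_sym[OF Cons.prems(1)[unfolded c']]] False c' by auto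
    have "dep_count E c' k \<le> dep_count E c' 0" "dep_count E (a # r) k' \<le> dep_count E (a # r) 0"
      using Cons.prems(2,3) k k' unfolding dep_ordered_def by blast+
    then have "dep_count E c' 0 = dep_count E (a # r) 0" using k(4) k'(4) by simp
    then have "fst b < fst a" "fst a < fst b"
      using Cons.prems(2,3) k k' c' unfolding dep_ordered_def by (metis nth_Cons_0)+
    then show ?thesis by simp
  qed
qed

end

subsection \<open>Existence by sorting\<close>

lemma mult_add_less_mult_add_iff:
  fixes N X Y a b :: nat
  assumes "a < N" "b < N"
  shows "X * N + a < Y * N + b \<longleftrightarrow> X < Y \<or> X = Y \<and> a < b"
proof -
  have less: "X' * N + a' < Y' * N + b'" if "X' < Y'" "a' < N" for X' Y' a' b' :: nat
  proof -
    have "Suc X' * N \<le> Y' * N" using that by (intro mult_le_mono1) simp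
    then show ?thesis using that by simp
  qed
  show ?thesis
  proof
    assume "X * N + a < Y * N + b"
    then show "X < Y \<or> X = Y \<and> a < b"
      using less[of Y X b a] assms by (metis linorder_neqE_nat add_less_cancel_left less_asym)
  qed (use less assms in auto)
qed

lemma weighted_sum_swap_less:
  fixes g h :: "nat \<Rightarrow> nat"
  assumes "Suc i < L" "g i < g (Suc i)" "h i = g (Suc i)" "h (Suc i) = g i"
    and "\<And>k. k \<noteq> i \<Longrightarrow> k \<noteq> Suc i \<Longrightarrow> h k = g k"
  shows "(\<Sum>k<L. k * h k) < (\<Sum>k<L. k * g k)"
proof -
  have split: "(\<Sum>k<L. k * f k) = i * f i + Suc i * f (Suc i) + (\<Sum>k\<in>{..<L} - {i} - {Suc i}. k * f k)"
    for f :: "nat \<Rightarrow> nat"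
    using assms(1) by (simp add: sum.remove[of "{..<L}" i] sum.remove[of "{..<L} - {i}" "Suc i"])
  have rest: "(\<Sum>k\<in>{..<L} - {i} - {Suc i}. k * h k) = (\<Sum>k\<in>{..<L} - {i} - {Suc i}. k * g k)"
    using assms(5) by (intro sum.cong) auto
  have "i * g (Suc i) + Suc i * g i < i * g i + Suc i * g (Suc i)"
    using assms(2) by simp
  then show ?thesis
    unfolding split[of h] split[of g] rest assms(3,4) by simp
qed

(* The pair (dep_count, n - vertex) in lexicographic order, for words over vertices below n. *)
definition sort_key :: "(nat \<Rightarrow> nat \<Rightarrow> bool) \<Rightarrow> nat \<Rightarrow> letter list \<Rightarrow> nat \<Rightarrow> nat" where
  "sort_key E n c k = dep_count E c k * Suc n + (n - fst (c ! k))"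

definition key_potential :: "(nat \<Rightarrow> nat \<Rightarrow> bool) \<Rightarrow> nat \<Rightarrow> letter list \<Rightarrow> nat" where
  "key_potential E n c = (\<Sum>k<length c. k * sort_key E n c k)"

lemma sort_key_less_iff:
  assumes "fst (c ! i) < n" "fst (c ! j) < n"
  shows "sort_key E n c j < sort_key E n c i \<longleftrightarrow>
    dep_count E c j < dep_count E c i \<or> dep_count E c j = dep_count E c i \<and> fst (c ! i) < fst (c ! j)"
  unfolding sort_key_def using assms by (subst mult_add_less_mult_add_iff) auto

lemma dep_ordered_if_sort_key_sorted:
  assumes c: "word_over {..<n} c" and sorted: "sorted_wrt (>) (map (sort_key E n c) [0..<length c])"
  shows "dep_ordered E c"
  unfolding dep_ordered_def
proof (intro allI impI)
  fix i j assume ij: "i < j \<and> j < length c"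
  then have "sort_key E n c j < sort_key E n c i"
    using sorted unfolding sorted_wrt_iff_nth_less by auto
  moreover have "fst (c ! i) < n" "fst (c ! j) < n" using c ij unfolding word_over_def by auto
  ultimately show "dep_count E c j \<le> dep_count E c i \<and>
      (dep_count E c i = dep_count E c j \<longrightarrow> fst (c ! i) < fst (c ! j))"
    using sort_key_less_iff by fastforce
qed

context raag_graph
begin

lemma dep_count_swap:
  assumes ab: "E (fst a) (fst b)"
  shows "k \<noteq> length p \<Longrightarrow> k \<noteq> Suc (length p) \<Longrightarrow>
      dep_count E (p @ b # a # q) k = dep_count E (p @ a # b # q) k"
    and "dep_count E (p @ b # a # q) (length p) = dep_count E (p @ a # b # q) (Suc (length p))"
    and "dep_count E (p @ b # a # q) (Suc (length p)) = dep_count E (p @ a # b # q) (length p)"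
proof -
  assume k: "k \<noteq> length p" "k \<noteq> Suc (length p)"
  show "dep_count E (p @ b # a # q) k = dep_count E (p @ a # b # q) k"
  proof (cases "k < length p")
    case True
    have "comm_eq E (drop (Suc k) p @ b # a # q) (drop (Suc k) p @ a # b # q)"
      using comm_eq_swap[of E b a "drop (Suc k) p" q] ab sym by blast
    then show ?thesis
      using True by (simp add: dep_count_def nth_append dep_part_comm_eq(1))
  next
    case False
    define j where "j = k - length (p @ [b, a])"
    have "k = length (p @ [b, a]) + j" using k False unfolding j_def by simp
    then show ?thesis using dep_count_append[of E "p @ [b, a]" q j] dep_count_append[of E "p @ [a, b]" q j]
      by simp
  qed
next
  show "dep_count E (p @ b # a # q) (length p) = dep_count E (p @ a # b # q) (Suc (length p))"
    using sym[OF ab] by (simp add: dep_count_def nth_append)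
next
  show "dep_count E (p @ b # a # q) (Suc (length p)) = dep_count E (p @ a # b # q) (length p)"
    using ab by (simp add: dep_count_def nth_append)
qed

lemma sort_key_swap:
  assumes "E (fst a) (fst b)"
  shows "k \<noteq> length p \<Longrightarrow> k \<noteq> Suc (length p) \<Longrightarrow>
      sort_key E n (p @ b # a # q) k = sort_key E n (p @ a # b # q) k"
    and "sort_key E n (p @ b # a # q) (length p) = sort_key E n (p @ a # b # q) (Suc (length p))"
    and "sort_key E n (p @ b # a # q) (Suc (length p)) = sort_key E n (p @ a # b # q) (length p)"
  using dep_count_swap[OF assms]
  by (auto simp: sort_key_def nth_append nth_Cons' split: if_splits)

lemma adjacent_pair_out_of_order:
  assumes c: "word_over {..<n} c" and i: "Suc i < length c"
    and unsorted: "\<not> sort_key E n c (Suc i) < sort_key E n c i"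
  shows "E (fst (c ! i)) (fst (c ! Suc i))" and "sort_key E n c i < sort_key E n c (Suc i)"
proof -
  have n: "fst (c ! i) < n" "fst (c ! Suc i) < n" using c i unfolding word_over_def by auto
  show adj: "E (fst (c ! i)) (fst (c ! Suc i))"
    using dep_count_less_if_not_adjacent[of i "Suc i" c] i unsorted sort_key_less_iff[OF n] by auto
  then have "fst (c ! i) \<noteq> fst (c ! Suc i)" using irrefl by metis
  then show "sort_key E n c i < sort_key E n c (Suc i)"
    using unsorted sort_key_less_iff[OF n] sort_key_less_iff[OF n(2,1)] by auto
qed

theorem exists_dep_ordered:
  assumes "word_over {..<n} c"
  shows "\<exists>c'. comm_eq E c c' \<and> dep_ordered E c'"
  using assms
proof (induction "key_potential E n c" arbitrary: c rule: less_induct)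
  case less
  show ?case
  proof (cases "sorted_wrt (>) (map (sort_key E n c) [0..<length c])")
    case True
    then show ?thesis using dep_ordered_if_sort_key_sorted[OF less.prems] comm_eq_refl by blast
  next
    case False
    then obtain i where i: "Suc i < length c" "\<not> sort_key E n c (Suc i) < sort_key E n c i"
      by (auto simp: sorted_wrt_iff_nth_Suc_transp transp_on_def)
    define p where "p = take i c"
    have c: "c = p @ c ! i # c ! Suc i # drop (Suc (Suc i)) c" and "length p = i"
      using i unfolding p_def by (auto simp: Cons_nth_drop_Suc)
    define c' where "c' = p @ c ! Suc i # c ! i # drop (Suc (Suc i)) c"
    note adj = adjacent_pair_out_of_order[OF less.prems i]
    have cc': "comm_eq E c c'"
      using comm_eq_swap[of E "c ! i" "c ! Suc i" p, OF adj(1)] c unfolding c'_def by metis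
    have "key_potential E n c' < key_potential E n c"
      unfolding key_potential_def comm_eq_length[OF cc', symmetric]
      by (rule weighted_sum_swap_less[OF i(1) adj(2)])
         (use sort_key_swap[OF adj(1), where p = p and q = "drop (Suc (Suc i)) c" and n = n] c \<open>length p = i\<close>
          in \<open>simp_all add: c'_def\<close>)
    moreover have "word_over {..<n} c'" using less.prems comm_eq_word_over[OF cc'] by simp
    ultimately obtain c'' where "comm_eq E c' c''" "dep_ordered E c''" using less.hyps by blast
    then show ?thesis using cc' comm_eq_trans by blast
  qed
qed

theorem canonical_expr_iff:
  "canonical_expr n E c \<longleftrightarrow> word_over {..<n} c \<and> reduced E c \<and> dep_ordered E c"
proof (cases "word_over {..<n} c \<and> reduced E c")
  case True
  then have rcount: "\<And>i. i < length c \<Longrightarrow> rcount n E c i = dep_count E c i"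
    using rcount_eq_dep_count by blast
  have adj: "E (fst (c ! i)) (fst (c ! j))"
    if "i < j" "j < length c" "dep_count E c i = dep_count E c j" for i j
    using dep_count_less_if_not_adjacent[OF that(1,2)] that(3) by fastforce
  show ?thesis
    using True reduced_iff_geodesic[of n c] rcount adj commutator_trivial
    unfolding canonical_expr_def dep_ordered_def
    by (smt (verit) order.strict_trans)
next
  case False
  then show ?thesis
    using reduced_iff_geodesic unfolding canonical_expr_def by blast
qed

end

theorem lemma3p2:
  fixes n :: nat and E :: "nat \<Rightarrow> nat \<Rightarrow> bool" and w :: "letter list"
  assumes "simplicial_graph n E"
    and "word_over {..<n} w"
  shows "\<exists>!c. canonical_expr n E c \<and> raag_eq E c w"
proof -
  interpret raag_graph E
    using assms(1) unfolding simplicial_graph_def by unfold_locales blast+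
  show ?thesis
  proof (rule ex_ex1I)
    obtain c where "comm_eq E (reduce E w) c" "dep_ordered E c"
      using exists_dep_ordered[OF word_over_reduce[OF assms(2)]] by blast
    then have "canonical_expr n E c" "raag_eq E c w"
      using canonical_expr_iff reduced_comm_eq[OF reduced_reduce] word_over_reduce[OF assms(2)]
        comm_eq_word_over raag_eq_trans[OF raag_eq_if_comm_eq[OF comm_eq_sym] reduce_raag_eq]
      by blast+
    then show "\<exists>c. canonical_expr n E c \<and> raag_eq E c w" by blast
  next
    fix c c'
    assume "canonical_expr n E c \<and> raag_eq E c w" "canonical_expr n E c' \<and> raag_eq E c' w"
    then show "c = c'"
      using canonical_expr_iff comm_eq_if_reduced_raag_eq raag_eq_trans raag_eq_sym dep_ordered_unique
      by meson
  qed
qed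

end
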